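(* For every $\mathcal W\in{\rm Gr}^{(0)}_+$ one has $\mathcal A_{\mathcal W}\cap\mathcal D_-=\{0\}$: the only Kac–Schwarz operator of $\mathcal W$ lying in $\mathcal D_-$ is $0$.
   Context: $H_+=\mathbb C[z]$, $H_-=z^{-1}\mathbb C[[z^{-1}]]$, $H=H_+\oplus H_-$. ${\rm Gr}^{(0)}_+$ is the set of closed subspaces $\mathcal W\subset H$ with $\pi_+:\mathcal W\to H_+$ (projection along $H_-$) an isomorphism. $\mathcal D=\mathbb C((z^{-1}))[[\partial_z]]$ is the ring of differential operators $\sum_{m\ge0}a_m(z)\partial_z^m$, $a_m\in H$, acting on $H$; $\mathcal D_\pm=H_\pm[[\partial_z]]$. The Kac–Schwarz algebra of $\mathcal W$ is $\mathcal A_{\mathcal W}=\{\mathtt A\in\mathcal D:\mathtt A\cdot\mathcal W\subset\mathcal W\}$. *)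

theory Defs
  imports Complex_Main
begin

text \<open>Elements of H = C((z^-1)) are coefficient functions int => complex
  (coefficient of z^n) with support bounded above.\<close>
type_synonym Hel = "int \<Rightarrow> complex"

definition inH :: "Hel \<Rightarrow> bool" where
  "inH f \<longleftrightarrow> (\<exists>N. \<forall>n>N. f n = 0)"

definition Hplus :: "Hel set" where
  "Hplus = {f. inH f \<and> (\<forall>n<0. f n = 0)}"

definition Hminus :: "Hel set" where
  "Hminus = {f. \<forall>n\<ge>0. f n = 0}"

definition pi_plus :: "Hel \<Rightarrow> Hel" where
  "pi_plus f = (\<lambda>n. if n \<ge> 0 then f n else 0)"

definition is_subspace :: "Hel set \<Rightarrow> bool" where
  "is_subspace W \<longleftrightarrow> W \<subseteq> Collect inH \<and> (\<lambda>_. 0) \<in> W \<and>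
     (\<forall>f\<in>W. \<forall>g\<in>W. (\<lambda>n. f n + g n) \<in> W) \<and>
     (\<forall>c. \<forall>f\<in>W. (\<lambda>n. c * f n) \<in> W)"

text \<open>Convergence in the z^{-1}-adic topology of H: eventually all coefficients
  of index >= -N agree, for every N.\<close>
definition zconv :: "(nat \<Rightarrow> Hel) \<Rightarrow> Hel \<Rightarrow> bool" where
  "zconv s f \<longleftrightarrow> (\<forall>N::int. \<exists>K. \<forall>k\<ge>K. \<forall>n\<ge>-N. s k n = f n)"

definition closedH :: "Hel set \<Rightarrow> bool" where
  "closedH W \<longleftrightarrow> (\<forall>s f. (\<forall>k. s k \<in> W) \<and> inH f \<and> zconv s f \<longrightarrow> f \<in> W)"

definition Gr0plus :: "Hel set set" where
  "Gr0plus = {W. is_subspace W \<and> closedH W \<and> bij_betw pi_plus W Hplus}"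

text \<open>Differential operators sum_m a_m(z) d^m, represented by m |-> a_m.\<close>
type_synonym Dop = "nat \<Rightarrow> Hel"

definition Dall :: "Dop set" where
  "Dall = {A. \<forall>m. inH (A m)}"

definition Dminus :: "Dop set" where
  "Dminus = {A. \<forall>m. A m \<in> Hminus}"

definition dz :: "Hel \<Rightarrow> Hel" where
  "dz f = (\<lambda>n. of_int (n + 1) * f (n + 1))"

definition hmult :: "Hel \<Rightarrow> Hel \<Rightarrow> Hel" where
  "hmult a g = (\<lambda>n. \<Sum>k\<in>{k. a k \<noteq> 0 \<and> g (n - k) \<noteq> 0}. a k * g (n - k))"

definition op_term :: "Dop \<Rightarrow> Hel \<Rightarrow> nat \<Rightarrow> int \<Rightarrow> complex" where
  "op_term A f m n = hmult (A m) ((dz ^^ m) f) n"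

text \<open>The action A.f is defined when each coefficient is a finite sum.\<close>
definition acts :: "Dop \<Rightarrow> Hel \<Rightarrow> bool" where
  "acts A f \<longleftrightarrow> (\<forall>n. finite {m. op_term A f m n \<noteq> 0})"

definition op_apply :: "Dop \<Rightarrow> Hel \<Rightarrow> Hel" where
  "op_apply A f = (\<lambda>n. \<Sum>m\<in>{m. op_term A f m n \<noteq> 0}. op_term A f m n)"

definition KS_algebra :: "Hel set \<Rightarrow> Dop set" where
  "KS_algebra W = {A \<in> Dall. \<forall>f\<in>W. acts A f \<and> op_apply A f \<in> W}"

end

theory Submission
  imports Defs
begin

text \<open>Suppose A = \<Sum> a_m(z) \<partial>^m \<in> D_- is nonzero and let s < 0 be the largest degree
  shift k - m among its nonzero monomials z^k \<partial>^m. For each n with n + s < 0 pick w_n \<in> W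
  with \<pi>_+ w_n = z^n. Then A w_n \<in> W has no coefficients in degrees \<ge> 0, so A w_n = 0 because
  \<pi>_+ is injective on W. Its coefficient of z^(n+s) is \<Sum>_(m\<le>n) n!/(n-m)! [z^(m+s)] a_m: a
  triangular system with nonzero diagonal entries n!. Hence [z^(m+s)] a_m = 0 whenever m + s < 0,
  contradicting the choice of s.\<close>

lemma dz_funpow_apply:
  "(dz ^^ m) f j = pochhammer (of_int (j + 1)) m * f (j + int m)"
proof (induction m arbitrary: j)
  case (Suc m)
  then show ?case
    by (simp add: dz_def pochhammer_rec algebra_simps)
qed simp

lemma pochhammer_of_int_eq_0_iff:
  "pochhammer (of_int (int n - int m + 1) :: 'a::field_char_0) m = 0 \<longleftrightarrow> n < m"
proof -
  have of_int_eq_neg: "(of_int x :: 'a) = - of_nat k \<longleftrightarrow> x = - int k" for x k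
    by (metis of_int_eq_iff of_int_minus of_int_of_nat_eq)
  have "(\<exists>k<m. int n - int m + 1 = - int k) \<longleftrightarrow> n < m"
  proof
    assume "n < m"
    then show "\<exists>k<m. int n - int m + 1 = - int k"
      by (intro exI[of _ "m - n - 1"]) auto
  qed auto
  then show ?thesis
    unfolding pochhammer_eq_0_iff of_int_eq_neg .
qed

lemma triangular_pochhammer_system_eq_0:
  fixes c :: "nat \<Rightarrow> 'a::field_char_0"
  assumes system: "\<And>n. n < N \<Longrightarrow> (\<Sum>m\<le>n. c m * pochhammer (of_int (int n - int m + 1)) m) = 0"
  shows "n < N \<Longrightarrow> c n = 0"
proof (induction n rule: less_induct)
  case (less n)
  have "(\<Sum>m\<le>n. c m * pochhammer (of_int (int n - int m + 1)) m) =
      c n * pochhammer (of_int (int n - int n + 1)) n +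
      (\<Sum>m<n. c m * pochhammer (of_int (int n - int m + 1)) m)"
    by (simp add: lessThan_Suc_atMost[symmetric])
  also have "(\<Sum>m<n. c m * pochhammer (of_int (int n - int m + 1)) m) = 0"
    using less by simp
  finally show ?case
    using system[OF less.prems] by (simp add: pochhammer_fact[symmetric])
qed

text \<open>The monomial z^k \<partial>^m maps z^j to a multiple of z^(j + k - m), so \<open>coeff_order_le A s\<close>
  says that A raises degrees by at most s.\<close>

definition coeff_order_le :: "Dop \<Rightarrow> int \<Rightarrow> bool" where
  "coeff_order_le A s \<longleftrightarrow> (\<forall>m k. A m k \<noteq> 0 \<longrightarrow> k - int m \<le> s)"

lemma op_term_eq_0_above:
  assumes "coeff_order_le A s" and "\<And>i. i > n \<Longrightarrow> f i = 0" and "d > n + s"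
  shows "op_term A f m d = 0"
proof -
  have no_terms: "{k. A m k \<noteq> 0 \<and> (dz ^^ m) f (d - k) \<noteq> 0} = {}"
    using assms by (fastforce simp: coeff_order_le_def dz_funpow_apply)
  show ?thesis
    unfolding op_term_def hmult_def no_terms by simp
qed

lemma op_term_top:
  assumes "coeff_order_le A s" and "\<And>i. i > n \<Longrightarrow> f i = 0"
  shows "op_term A f m (n + s) = A m (int m + s) * (dz ^^ m) f (n - int m)"
proof -
  have "k = int m + s" if "A m k \<noteq> 0" and "(dz ^^ m) f (n + s - k) \<noteq> 0" for k
  proof -
    have "k - int m \<le> s"
      using assms(1) \<open>A m k \<noteq> 0\<close> by (simp add: coeff_order_le_def)
    moreover have "n + s - k + int m \<le> n"
      using assms(2) \<open>(dz ^^ m) f (n + s - k) \<noteq> 0\<close> by (force simp: dz_funpow_apply)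
    ultimately show ?thesis
      by linarith
  qed
  then have "{k. A m k \<noteq> 0 \<and> (dz ^^ m) f (n + s - k) \<noteq> 0} \<subseteq> {int m + s}"
    by blast
  then have "hmult (A m) ((dz ^^ m) f) (n + s) =
      (\<Sum>k\<in>{int m + s}. A m k * (dz ^^ m) f (n + s - k))"
    unfolding hmult_def by (intro sum.mono_neutral_left) auto
  then show ?thesis
    by (simp add: op_term_def)
qed

lemma op_apply_eq_0_above:
  assumes "coeff_order_le A s" and "\<And>i. i > n \<Longrightarrow> f i = 0" and "d > n + s"
  shows "op_apply A f d = 0"
  using op_term_eq_0_above[OF assms] by (simp add: op_apply_def)

lemma op_apply_top:
  assumes "coeff_order_le A s" and "\<And>i. i > int n \<Longrightarrow> f i = 0"
  shows "op_apply A f (int n + s) =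
    (\<Sum>m\<le>n. A m (int m + s) * pochhammer (of_int (int n - int m + 1)) m) * f (int n)"
proof -
  have top: "op_term A f m (int n + s) =
      A m (int m + s) * pochhammer (of_int (int n - int m + 1)) m * f (int n)" for m
    using op_term_top[OF assms] by (simp add: dz_funpow_apply)
  then have "{m. op_term A f m (int n + s) \<noteq> 0} \<subseteq> {..n}"
    using pochhammer_of_int_eq_0_iff[of n]
    by (fastforce simp del: of_int_add of_int_diff of_int_of_nat_eq)
  then have "op_apply A f (int n + s) = (\<Sum>m\<le>n. op_term A f m (int n + s))"
    unfolding op_apply_def by (intro sum.mono_neutral_left) auto
  then show ?thesis
    by (simp add: top sum_distrib_right)
qed

lemma Gr0plus_eq_0_if_pi_plus_eq_0:
  assumes "W \<in> Gr0plus" and "f \<in> W" and "\<And>i. i \<ge> 0 \<Longrightarrow> f i = 0"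
  shows "f = (\<lambda>_. 0)"
proof -
  have "inj_on pi_plus W" and "(\<lambda>_. 0) \<in> W"
    using assms(1) by (auto simp: Gr0plus_def bij_betw_def is_subspace_def)
  moreover have "pi_plus f = pi_plus (\<lambda>_. 0)"
    using assms(3) by (auto simp: pi_plus_def)
  ultimately show ?thesis
    using assms(2) by (meson inj_onD)
qed

lemma Gr0plus_exists_monic:
  assumes "W \<in> Gr0plus"
  obtains w where "w \<in> W" and "w (int n) = 1" and "\<And>i. i > int n \<Longrightarrow> w i = 0"
proof -
  define e :: Hel where "e = (\<lambda>i. if i = int n then 1 else 0)"
  have "e \<in> Hplus"
    unfolding Hplus_def inH_def e_def by (auto intro!: exI[of _ "int n"])
  then have "e \<in> pi_plus ` W"
    using assms by (simp add: Gr0plus_def bij_betw_def)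
  then obtain w where "w \<in> W" and w: "pi_plus w = e"
    by blast
  moreover have "w i = e i" if "i \<ge> 0" for i
    using w that by (metis pi_plus_def)
  ultimately show thesis
    by (intro that[of w]) (simp_all add: e_def)
qed

lemma KS_algebra_zero:
  assumes "is_subspace W"
  shows "(\<lambda>_ _. 0) \<in> KS_algebra W"
proof -
  have "op_term (\<lambda>_ _. 0) f m n = 0" for f m n
    by (simp add: op_term_def hmult_def)
  then show ?thesis
    using assms by (simp add: KS_algebra_def Dall_def inH_def acts_def op_apply_def is_subspace_def)
qed

lemma KS_algebra_leading_system:
  assumes "W \<in> Gr0plus" and "A \<in> KS_algebra W" and "coeff_order_le A s" and "int n + s < 0"
  shows "(\<Sum>m\<le>n. A m (int m + s) * pochhammer (of_int (int n - int m + 1)) m) = 0"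
proof -
  obtain w where "w \<in> W" and w_n: "w (int n) = 1" and w_above: "\<And>i. i > int n \<Longrightarrow> w i = 0"
    using Gr0plus_exists_monic[OF assms(1)] by blast
  then have "op_apply A w \<in> W"
    using assms(2) by (simp add: KS_algebra_def)
  moreover have "op_apply A w i = 0" if "i \<ge> 0" for i
    using op_apply_eq_0_above[where n = "int n" and f = w, OF assms(3) w_above] that assms(4) by simp
  ultimately have "op_apply A w = (\<lambda>_. 0)"
    using Gr0plus_eq_0_if_pi_plus_eq_0[OF assms(1)] by blast
  then show ?thesis
    using op_apply_top[where n = n and f = w, OF assms(3) w_above] w_n by simp
qed

lemma Dminus_obtain_extremal_coeff:
  assumes "A \<in> Dminus" and "A m k \<noteq> 0"
  obtains m\<^sub>0 k\<^sub>0 where "A m\<^sub>0 k\<^sub>0 \<noteq> 0" and "k\<^sub>0 < 0" and "coeff_order_le A (k\<^sub>0 - int m\<^sub>0)"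
proof -
  have neg: "k < 0" if "A m k \<noteq> 0" for m k
  proof (rule ccontr)
    assume "\<not> k < 0"
    then have "A m k = 0"
      using assms(1) by (simp add: Dminus_def Hminus_def)
    with that show False
      by contradiction
  qed
  obtain m\<^sub>0 k\<^sub>0 where nz: "A m\<^sub>0 k\<^sub>0 \<noteq> 0"
    and least: "\<And>m k. A m k \<noteq> 0 \<Longrightarrow> nat (int m\<^sub>0 - k\<^sub>0) \<le> nat (int m - k)"
    using assms(2)
      ex_has_least_nat[of "\<lambda>(m, k). A m k \<noteq> 0" "(m, k)" "\<lambda>(m, k). nat (int m - k)"]
    by auto
  have "int m\<^sub>0 - k\<^sub>0 \<le> int m - k" if "A m k \<noteq> 0" for m k
    using least[OF that] neg[OF nz] by (simp add: nat_le_eq_zle)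
  then have "coeff_order_le A (k\<^sub>0 - int m\<^sub>0)"
    unfolding coeff_order_le_def by force
  with nz neg[OF nz] show thesis
    by (rule that)
qed

theorem mainTheorem3:
  assumes "W \<in> Gr0plus"
  shows "KS_algebra W \<inter> Dminus = {(\<lambda>_ _. 0)}"
proof -
  have "A = (\<lambda>_ _. 0)" if A: "A \<in> KS_algebra W" "A \<in> Dminus" for A
  proof (rule ccontr)
    assume "A \<noteq> (\<lambda>_ _. 0)"
    then obtain m k where "A m k \<noteq> 0"
      by (meson ext)
    then obtain m\<^sub>0 k\<^sub>0 where nz: "A m\<^sub>0 k\<^sub>0 \<noteq> 0" and "k\<^sub>0 < 0"
      and order: "coeff_order_le A (k\<^sub>0 - int m\<^sub>0)"
      using Dminus_obtain_extremal_coeff[OF A(2)] by blast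
    define N where "N = nat (int m\<^sub>0 - k\<^sub>0)"
    have "(\<Sum>j\<le>n. A j (int j + (k\<^sub>0 - int m\<^sub>0)) * pochhammer (of_int (int n - int j + 1)) j) = 0"
      if "n < N" for n
      using KS_algebra_leading_system[OF assms A(1) order] that by (simp add: N_def)
    moreover have "m\<^sub>0 < N"
      using \<open>k\<^sub>0 < 0\<close> by (simp add: N_def zless_nat_eq_int_zless)
    ultimately have "A m\<^sub>0 (int m\<^sub>0 + (k\<^sub>0 - int m\<^sub>0)) = 0"
      by (rule triangular_pochhammer_system_eq_0)
    with nz show False
      by simp
  qed
  moreover have "(\<lambda>_ _. 0) \<in> Dminus" and "is_subspace W"
    using assms by (auto simp: Dminus_def Hminus_def Gr0plus_def)
  ultimately show ?thesis
    using KS_algebra_zero by blast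
qed

end
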